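(* Let $G$ be a 2-connected graph on $n\ge 4$ vertices, and let $p$ be the length of a longest path in $G$. Then there is a bond of $G$ meeting every path of $G$ of length at least $p-1$.
   Context: All graphs are finite, simple and undirected. The length of a path is its number of edges. A bond of $G$ is a minimal nonempty edge-cut, where an edge-cut is a set of edges of the form $\{xy\in E(G): x\in X, y\in V(G)\setminus X\}$ for some $X\subseteq V(G)$. A set of edges meets a path if the path contains at least one edge of the set. *)

theory Defs
  imports Main
begin

definition simple_graph :: "'a set \<Rightarrow> 'a set set \<Rightarrow> bool" where
  "simple_graph V E \<longleftrightarrow> finite V \<and> (\<forall>e\<in>E. \<exists>x y. x \<in> V \<and> y \<in> V \<and> x \<noteq> y \<and> e = {x, y})"

definition is_path :: "'a set \<Rightarrow> 'a set set \<Rightarrow> 'a list \<Rightarrow> bool" where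
  "is_path V E P \<longleftrightarrow> P \<noteq> [] \<and> distinct P \<and> set P \<subseteq> V \<and>
     (\<forall>i. Suc i < length P \<longrightarrow> {P ! i, P ! Suc i} \<in> E)"

definition path_length :: "'a list \<Rightarrow> nat" where
  "path_length P = length P - 1"

definition path_edges :: "'a list \<Rightarrow> 'a set set" where
  "path_edges P = {{P ! i, P ! Suc i} | i. Suc i < length P}"

definition connected_graph :: "'a set \<Rightarrow> 'a set set \<Rightarrow> bool" where
  "connected_graph V E \<longleftrightarrow> V \<noteq> {} \<and>
     (\<forall>x\<in>V. \<forall>y\<in>V. \<exists>P. is_path V E P \<and> hd P = x \<and> last P = y)"

definition delete_vertex :: "'a set set \<Rightarrow> 'a \<Rightarrow> 'a set set" where
  "delete_vertex E v = {e \<in> E. v \<notin> e}"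

definition two_connected :: "'a set \<Rightarrow> 'a set set \<Rightarrow> bool" where
  "two_connected V E \<longleftrightarrow> card V > 2 \<and> connected_graph V E \<and>
     (\<forall>v\<in>V. connected_graph (V - {v}) (delete_vertex E v))"

definition edge_cut_of :: "'a set \<Rightarrow> 'a set set \<Rightarrow> 'a set \<Rightarrow> 'a set set" where
  "edge_cut_of V E X = {e \<in> E. \<exists>x y. e = {x, y} \<and> x \<in> X \<and> y \<in> V - X}"

definition is_edge_cut :: "'a set \<Rightarrow> 'a set set \<Rightarrow> 'a set set \<Rightarrow> bool" where
  "is_edge_cut V E F \<longleftrightarrow> (\<exists>X\<subseteq>V. F = edge_cut_of V E X)"

definition is_bond :: "'a set \<Rightarrow> 'a set set \<Rightarrow> 'a set set \<Rightarrow> bool" where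
  "is_bond V E B \<longleftrightarrow> is_edge_cut V E B \<and> B \<noteq> {} \<and>
     (\<forall>F. is_edge_cut V E F \<and> F \<noteq> {} \<and> F \<subseteq> B \<longrightarrow> F = B)"

end

theory Submission
  imports Defs
begin

text \<open>
  Call \<open>Y \<subseteq> V\<close> a short side if \<open>G[Y]\<close> and \<open>G[V - Y]\<close> are connected and \<open>G[Y]\<close> contains
  no long path, i.e. none of length at least \<open>p - 1\<close>. The edge cut of such a \<open>Y\<close> is a bond, so
  it suffices to find a short side \<open>Y\<close> for which \<open>G[V - Y]\<close> contains no long path either.
  Starting from a single vertex, enlarge \<open>Y\<close> while \<open>V - Y\<close> contains a long path \<open>R\<close>: by
  2-connectivity some neighbour \<open>x\<close> of \<open>Y\<close> can be removed from \<open>V - Y\<close> keeping it connected,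
  and \<open>Y \<union> {x}\<close> is again short, since a long path \<open>Q\<close> in it would meet \<open>R\<close> at most in \<open>x\<close>.
  That is impossible: in a 2-connected graph two long paths share two vertices. If they were
  disjoint, two \<open>R\<close>--\<open>Q\<close> connections would give a path longer than \<open>p\<close>; if they met only in
  \<open>x\<close>, the four arms at \<open>x\<close> would have to be linked in \<open>G - x\<close> by single edges, and two such
  edges meeting a common arm create a path longer than \<open>p\<close>.
\<close>

section \<open>Paths and reachability\<close>

lemma is_path_iff_successively:
  "is_path S E P \<longleftrightarrow> P \<noteq> [] \<and> distinct P \<and> set P \<subseteq> S \<and> successively (\<lambda>a b. {a, b} \<in> E) P"
  by (simp add: is_path_def successively_conv_nth)

lemma is_path_nonempty: "is_path S E P \<Longrightarrow> P \<noteq> []"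
  and is_path_distinct: "is_path S E P \<Longrightarrow> distinct P"
  and is_path_subset: "is_path S E P \<Longrightarrow> set P \<subseteq> S"
  by (simp_all add: is_path_def)

lemma is_path_singleton [simp]: "is_path S E [a] \<longleftrightarrow> a \<in> S"
  by (simp add: is_path_iff_successively)

lemma is_path_Cons_Cons:
  "is_path S E (a # b # P) \<longleftrightarrow> a \<in> S \<and> a \<notin> set (b # P) \<and> {a, b} \<in> E \<and> is_path S E (b # P)"
  by (auto simp: is_path_iff_successively)

lemma is_path_append:
  "xs \<noteq> [] \<Longrightarrow> ys \<noteq> [] \<Longrightarrow> is_path S E (xs @ ys) \<longleftrightarrow>
     is_path S E xs \<and> is_path S E ys \<and> set xs \<inter> set ys = {} \<and> {last xs, hd ys} \<in> E"
  by (auto simp: is_path_iff_successively successively_append_iff)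

lemma is_path_appendI:
  "is_path S E xs \<Longrightarrow> is_path S E ys \<Longrightarrow> set xs \<inter> set ys = {} \<Longrightarrow> {last xs, hd ys} \<in> E
    \<Longrightarrow> is_path S E (xs @ ys)"
  by (subst is_path_append) (auto simp: is_path_def)

lemma is_path_appendD1: "is_path S E (xs @ ys) \<Longrightarrow> xs \<noteq> [] \<Longrightarrow> is_path S E xs"
  by (cases "ys = []") (auto simp: is_path_append)

lemma is_path_appendD2: "is_path S E (xs @ ys) \<Longrightarrow> ys \<noteq> [] \<Longrightarrow> is_path S E ys"
  by (cases "xs = []") (auto simp: is_path_append)

lemma is_path_glue:
  "is_path S E (xs @ W) \<Longrightarrow> is_path S E (W @ ys) \<Longrightarrow> W \<noteq> [] \<Longrightarrow> set xs \<inter> set ys = {}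
    \<Longrightarrow> is_path S E (xs @ W @ ys)"
  by (auto simp: is_path_iff_successively successively_append_iff)

lemma is_path_rev [simp]: "is_path S E (rev P) \<longleftrightarrow> is_path S E P"
  by (simp add: is_path_iff_successively insert_commute)

lemma is_path_mono: "is_path S E P \<Longrightarrow> S \<subseteq> T \<Longrightarrow> is_path T E P"
  unfolding is_path_def by blast

lemma is_path_restrict: "is_path S E P \<Longrightarrow> set P \<subseteq> T \<Longrightarrow> is_path T E P"
  unfolding is_path_def by blast

lemma path_edges_zip: "path_edges P = (\<lambda>(u, v). {u, v}) ` set (zip P (tl P))"
  unfolding path_edges_def set_zip
proof (intro set_eqI iffI)
  fix e assume "e \<in> {{P ! i, P ! Suc i} |i. Suc i < length P}"
  then obtain i where "e = {P ! i, P ! Suc i}" "Suc i < length P" by blast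
  then show "e \<in> (\<lambda>(u, v). {u, v}) ` {(P ! i, tl P ! i) |i. i < min (length P) (length (tl P))}"
    by (intro image_eqI[of _ _ "(P ! i, P ! Suc i)"]) (auto simp: nth_tl)
qed (auto simp: nth_tl)

lemma path_edges_Cons_Cons [simp]: "path_edges (a # b # P) = insert {a, b} (path_edges (b # P))"
  by (simp add: path_edges_zip)

lemma path_edges_subset: "is_path S E P \<Longrightarrow> path_edges P \<subseteq> E"
  by (auto simp: path_edges_def is_path_def)

lemma path_edges_crossing:
  assumes "a \<in> set P" "a \<in> A" "b \<in> set P" "b \<notin> A"
  shows "\<exists>u\<in>set P. \<exists>v\<in>set P. u \<in> A \<and> v \<notin> A \<and> {u, v} \<in> path_edges P"
  using assms
proof (induction P arbitrary: a b rule: induct_list012)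
  case (3 x y P)
  show ?case
  proof (cases "x \<in> A \<longleftrightarrow> y \<in> A")
    case True
    then obtain a' b' where "a' \<in> set (y # P)" "a' \<in> A" "b' \<in> set (y # P)" "b' \<notin> A"
      using "3.prems" by auto
    then obtain u v where "u \<in> set (y # P)" "v \<in> set (y # P)" "u \<in> A" "v \<notin> A"
        "{u, v} \<in> path_edges (y # P)"
      using "3.IH"(2) by blast
    then show ?thesis by auto
  next
    case False
    then show ?thesis by (auto simp: insert_commute)
  qed
qed auto

lemma is_path_crossing_edge:
  assumes "is_path S E P" "a \<in> set P" "a \<in> A" "b \<in> set P" "b \<notin> A"
  shows "\<exists>u\<in>S. \<exists>v\<in>S. u \<in> A \<and> v \<notin> A \<and> {u, v} \<in> E"
proof -
  obtain u v where "u \<in> set P" "v \<in> set P" "u \<in> A" "v \<notin> A" "{u, v} \<in> path_edges P"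
    using path_edges_crossing[OF assms(2-5)] by blast
  then show ?thesis using is_path_subset[OF assms(1)] path_edges_subset[OF assms(1)] by blast
qed

definition reach :: "'a set \<Rightarrow> 'a set set \<Rightarrow> 'a \<Rightarrow> 'a \<Rightarrow> bool" where
  "reach S E a b \<longleftrightarrow> (\<exists>P. is_path S E P \<and> hd P = a \<and> last P = b)"

lemma connected_graph_iff_reach:
  "connected_graph S E \<longleftrightarrow> S \<noteq> {} \<and> (\<forall>a\<in>S. \<forall>b\<in>S. reach S E a b)"
  unfolding connected_graph_def reach_def by blast

lemma reach_refl: "a \<in> S \<Longrightarrow> reach S E a a"
  unfolding reach_def by (intro exI[of _ "[a]"]) simp

lemma reach_sym: "reach S E a b \<Longrightarrow> reach S E b a"
  unfolding reach_def by (metis is_path_rev is_path_nonempty hd_rev last_rev)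

lemma reach_in: "reach S E a b \<Longrightarrow> a \<in> S \<and> b \<in> S"
  unfolding reach_def by (metis hd_in_set last_in_set is_path_nonempty is_path_subset subsetD)

lemma reach_mono: "reach S E a b \<Longrightarrow> S \<subseteq> T \<Longrightarrow> reach T E a b"
  unfolding reach_def by (metis is_path_mono)

lemma reach_prefix: assumes "is_path S E P" "u \<in> set P" shows "reach S E (hd P) u"
proof -
  obtain P1 P2 where P: "P = P1 @ u # P2" using assms(2) by (meson split_list)
  have "is_path S E (P1 @ [u])" using assms(1) P is_path_appendD1[of S E "P1 @ [u]" P2] by simp
  moreover have "hd (P1 @ [u]) = hd P" using P by (cases P1) auto
  ultimately show ?thesis unfolding reach_def by (metis last_snoc)
qed

lemma reach_step: assumes "reach S E a b" "{b, c} \<in> E" "c \<in> S" shows "reach S E a c"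
proof -
  obtain P where P: "is_path S E P" "hd P = a" "last P = b" using assms(1) reach_def by metis
  show ?thesis
  proof (cases "c \<in> set P")
    case True
    then show ?thesis using reach_prefix[OF P(1)] P(2) by simp
  next
    case False
    have "is_path S E (P @ [c])" using P False assms(2,3) by (intro is_path_appendI) auto
    moreover have "hd (P @ [c]) = a" using P is_path_nonempty[OF P(1)] by simp
    ultimately show ?thesis unfolding reach_def by (metis last_snoc)
  qed
qed

lemma reach_along_path: "is_path S E Q \<Longrightarrow> reach S E a (hd Q) \<Longrightarrow> reach S E a (last Q)"
proof (induction Q rule: induct_list012)
  case (3 x y Q)
  have "is_path S E (y # Q)" "{x, y} \<in> E" "y \<in> S"
    using "3.prems"(1) by (auto simp: is_path_Cons_Cons is_path_def)
  moreover from this have "reach S E a y" using "3.prems"(2) reach_step by fastforce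
  ultimately show ?case using "3.IH"(2) by simp
qed (simp_all add: is_path_def)

lemma reach_trans: "reach S E a b \<Longrightarrow> reach S E b c \<Longrightarrow> reach S E a c"
  by (metis reach_along_path reach_def)

lemma connected_graph_insert:
  assumes "connected_graph Y E" "y \<in> Y" "{x, y} \<in> E"
  shows "connected_graph (insert x Y) E"
proof -
  have Y: "reach (insert x Y) E a b" if "a \<in> Y" "b \<in> Y" for a b
    using assms(1) that by (auto simp: connected_graph_iff_reach intro: reach_mono)
  have x: "reach (insert x Y) E a x" if "a \<in> Y" for a
    using reach_step[OF Y[OF that assms(2)]] assms(3) by (simp add: insert_commute)
  have "reach (insert x Y) E a b" if "a \<in> insert x Y" "b \<in> insert x Y" for a b
    using that Y x[THEN reach_sym] x reach_refl[of x "insert x Y" E] by auto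
  then show ?thesis unfolding connected_graph_iff_reach by blast
qed

definition ab_path :: "'a set \<Rightarrow> 'a set set \<Rightarrow> 'a set \<Rightarrow> 'a set \<Rightarrow> 'a list \<Rightarrow> bool" where
  "ab_path S E A B W \<longleftrightarrow> is_path S E W \<and> set W \<inter> A = {hd W} \<and> set W \<inter> B = {last W}"

lemma is_path_first_hit:
  assumes "is_path S E P" "v \<in> set P" "v \<in> B"
  shows "\<exists>W. is_path S E W \<and> hd W = hd P \<and> set W \<inter> B = {last W} \<and> set W \<subseteq> set P"
  using assms
proof (induction P)
  case (Cons x P)
  show ?case
  proof (cases "x \<in> B")
    case True
    then show ?thesis using Cons.prems by (intro exI[of _ "[x]"]) (auto simp: is_path_def)
  next
    case False
    then obtain y P' where P: "P = y # P'" using Cons.prems by (cases P) auto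
    have "is_path S E P" "{x, y} \<in> E" "x \<notin> set P" "x \<in> S"
      using Cons.prems(1) unfolding P is_path_Cons_Cons by auto
    moreover obtain W where W: "is_path S E W" "hd W = y" "set W \<inter> B = {last W}" "set W \<subseteq> set P"
      using Cons.IH[OF \<open>is_path S E P\<close>] Cons.prems(2,3) False P by auto
    ultimately have "is_path S E ([x] @ W)"
      by (intro is_path_appendI) auto
    then show ?thesis using W P is_path_nonempty[OF W(1)] by (intro exI[of _ "x # W"]) (auto simp: False)
  qed
qed simp

lemma is_path_last_hit:
  assumes "is_path S E P" "v \<in> set P" "v \<in> A"
  shows "\<exists>W. is_path S E W \<and> last W = last P \<and> set W \<inter> A = {hd W} \<and> set W \<subseteq> set P"
proof -
  obtain W where W: "is_path S E W" "hd W = hd (rev P)" "set W \<inter> A = {last W}" "set W \<subseteq> set P"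
    using is_path_first_hit[of S E "rev P" v A] assms by auto
  have "W \<noteq> []" "P \<noteq> []" using W(1) assms(1) is_path_nonempty by auto
  then show ?thesis using W by (intro exI[of _ "rev W"]) (auto simp: hd_rev last_rev)
qed

lemma connected_graph_ab_path:
  assumes "connected_graph S E" "a \<in> S \<inter> A" "b \<in> S \<inter> B"
  shows "\<exists>W. ab_path S E A B W"
proof -
  obtain P where P: "is_path S E P" "hd P = a" "last P = b"
    using assms unfolding connected_graph_def by blast
  have "a \<in> set P" using P is_path_nonempty hd_in_set by metis
  then obtain W1 where W1: "is_path S E W1" "last W1 = b" "set W1 \<inter> A = {hd W1}" "set W1 \<subseteq> set P"
    using is_path_last_hit[OF P(1) \<open>a \<in> set P\<close>, of A] assms(2) P(3) by auto
  have "b \<in> set W1" using W1 is_path_nonempty last_in_set by metis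
  then obtain W where W: "is_path S E W" "hd W = hd W1" "set W \<inter> B = {last W}" "set W \<subseteq> set W1"
    using is_path_first_hit[OF W1(1) \<open>b \<in> set W1\<close>, of B] assms(3) by auto
  have "hd W \<in> set W" using W is_path_nonempty hd_in_set by metis
  then have "set W \<inter> A = {hd W}" using W W1 by auto
  then show ?thesis using W unfolding ab_path_def by blast
qed

lemma two_connected_connected: "two_connected V E \<Longrightarrow> connected_graph V E"
  by (simp add: two_connected_def)

lemma two_connected_delete:
  assumes "two_connected V E" "v \<in> V"
  shows "connected_graph (V - {v}) E"
proof -
  have "connected_graph (V - {v}) (delete_vertex E v)" using assms by (simp add: two_connected_def)
  then show ?thesis
    unfolding connected_graph_def is_path_def delete_vertex_def by blast
qed

lemma ab_pathD:
  assumes "ab_path S E A B W"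
  shows "is_path S E W" "hd W \<in> A" "last W \<in> B" "set W \<inter> A = {hd W}" "set W \<inter> B = {last W}"
  using assms unfolding ab_path_def by auto

lemma is_path_splice:
  assumes "is_path S E (R1 @ a # R2)" "is_path S E W" "hd W = a" "set W \<inter> set (R1 @ a # R2) = {a}"
  shows "is_path S E (R1 @ W)"
proof (cases "R1 = []")
  case False
  have "{last R1, a} \<in> E" using assms(1) False is_path_append[of R1 "a # R2" S E] by simp
  moreover have "is_path S E R1" using is_path_appendD1[OF assms(1) False] .
  moreover have "set R1 \<inter> set W = {}" using is_path_distinct[OF assms(1)] assms(4) by auto
  ultimately show ?thesis using assms(2,3) by (intro is_path_appendI) auto
qed (use assms in simp)

lemma is_path_splice_end:
  assumes "is_path S E (R1 @ a # R2)" "is_path S E W" "last W = a" "set W \<inter> set (R1 @ a # R2) = {a}"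
  shows "is_path S E (W @ R2)"
proof -
  have "is_path S E (rev R2 @ a # rev R1)" "is_path S E (rev W)" "hd (rev W) = a"
    using assms(1-3) is_path_rev[of S E "R1 @ a # R2"] is_path_nonempty[OF assms(2)]
    by (auto simp: hd_rev)
  moreover have "set (rev W) \<inter> set (rev R2 @ a # rev R1) = {a}" using assms(4) by auto
  ultimately have "is_path S E (rev R2 @ rev W)" by (rule is_path_splice)
  then show ?thesis using is_path_rev[of S E "W @ R2"] by simp
qed

section \<open>Components and removable boundary vertices\<close>

definition component :: "'a set \<Rightarrow> 'a set set \<Rightarrow> 'a \<Rightarrow> 'a set" where
  "component S E w = {u. reach S E w u}"

lemma component_subset: "component S E w \<subseteq> S"
  using reach_in unfolding component_def by fastforce

lemma in_component_self: "w \<in> S \<Longrightarrow> w \<in> component S E w"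
  by (simp add: component_def reach_refl)

lemma component_edge_closed:
  "u \<in> component S E w \<Longrightarrow> v \<in> S \<Longrightarrow> {u, v} \<in> E \<Longrightarrow> v \<in> component S E w"
  unfolding component_def using reach_step by fastforce

lemma reach_in_component:
  assumes "u \<in> component S E w"
  shows "reach (component S E w) E w u"
proof -
  obtain P where P: "is_path S E P" "hd P = w" "last P = u"
    using assms unfolding component_def reach_def by blast
  have "set P \<subseteq> component S E w" using reach_prefix[OF P(1)] P(2) unfolding component_def by auto
  then show ?thesis using is_path_restrict[OF P(1)] P(2,3) unfolding reach_def by blast
qed

lemma two_connected_finite: "two_connected V E \<Longrightarrow> finite V"
  by (metis card.infinite not_less_zero two_connected_def)

lemma two_connected_component_exit:
  assumes "two_connected V E" "X \<subseteq> V" "x \<in> X" "w \<in> X - {x}" "y \<in> V - X"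
  shows "\<exists>x'\<in>component (X - {x}) E w. \<exists>y'\<in>V - X. {x', y'} \<in> E"
proof -
  let ?K = "component (X - {x}) E w"
  have "w \<in> V - {x}" "y \<in> V - {x}" using assms(2-5) by auto
  then obtain P where P: "is_path (V - {x}) E P" "hd P = w" "last P = y"
    using two_connected_delete[OF assms(1)] assms(2,3) unfolding connected_graph_def by blast
  have "w \<in> ?K" "y \<notin> ?K" using in_component_self[OF assms(4)] component_subset[of "X - {x}" E w] assms(5) by auto
  moreover have "w \<in> set P" "y \<in> set P" using P is_path_nonempty by fastforce+
  ultimately obtain u v where uv: "u \<in> ?K" "v \<in> V - {x}" "v \<notin> ?K" "{u, v} \<in> E"
    using is_path_crossing_edge[OF P(1)] by metis
  then have "v \<notin> X" using component_edge_closed[of u "X - {x}" E w v] by blast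
  then show ?thesis using uv by blast
qed

text \<open>The component of \<open>v\<close> in \<open>X - {x}\<close> avoids \<open>x'\<close> and is joined to \<open>x\<close> by an edge, as \<open>G[X]\<close>
  is connected.\<close>

lemma reach_from_other_component:
  assumes "connected_graph X E" "x \<in> X" "x' \<in> component (X - {x}) E w"
    and v: "v \<in> X - {x}" "v \<notin> component (X - {x}) E w"
  shows "reach (X - {x'}) E v x"
proof -
  let ?C = "component (X - {x}) E v"
  have "x' \<notin> ?C"
  proof
    assume "x' \<in> ?C"
    then have "reach (X - {x}) E x' v" using reach_sym[of "X - {x}" E v x'] unfolding component_def by simp
    then show False
      using reach_trans[of "X - {x}" E w x' v] assms(3) v(2) unfolding component_def by simp
  qed
  then have C: "?C \<subseteq> X - {x'}" using component_subset[of "X - {x}" E v] by blast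
  obtain P where P: "is_path X E P" "hd P = v" "last P = x"
    using assms(1,2) v(1) unfolding connected_graph_def by blast
  have "v \<in> ?C" "x \<notin> ?C" using in_component_self[OF v(1)] component_subset[of "X - {x}" E v] by auto
  moreover have "v \<in> set P" "x \<in> set P" using P is_path_nonempty by fastforce+
  ultimately obtain a b where ab: "a \<in> ?C" "b \<in> X" "b \<notin> ?C" "{a, b} \<in> E"
    using is_path_crossing_edge[OF P(1)] by metis
  then have "b = x" using component_edge_closed[of a "X - {x}" E v b] by blast
  have "reach (X - {x'}) E v a" using reach_mono[OF reach_in_component[OF ab(1)] C] .
  moreover have "x \<in> X - {x'}" using assms(2,3) component_subset[of "X - {x}" E w] by blast
  ultimately show ?thesis using reach_step ab(4) \<open>b = x\<close> by metis
qed

lemma component_shrinks: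
  assumes "v \<in> component (X - {x}) E w" "\<not> reach (X - {x'}) E v x"
  shows "component (X - {x'}) E v \<subseteq> component (X - {x}) E w - {x'}"
proof
  fix u assume "u \<in> component (X - {x'}) E v"
  then obtain P where P: "is_path (X - {x'}) E P" "hd P = v" "last P = u"
    unfolding component_def reach_def by blast
  have "x \<notin> set P" using reach_prefix[OF P(1)] P(2) assms(2) by blast
  then have "set P \<subseteq> X - {x}" using is_path_subset[OF P(1)] by blast
  then have "is_path (X - {x}) E P" by (rule is_path_restrict[OF P(1)])
  then have "reach (X - {x}) E v u" using P(2,3) unfolding reach_def by blast
  then have "u \<in> component (X - {x}) E w"
    using assms(1) reach_trans[of "X - {x}" E w v u] unfolding component_def by simp
  moreover have "u \<noteq> x'"
    using P(3) is_path_nonempty[OF P(1)] is_path_subset[OF P(1)] last_in_set by blast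
  ultimately show "u \<in> component (X - {x}) E w - {x'}" by blast
qed

text \<open>Every vertex of \<open>X - {x'}\<close> still reaches \<open>x\<close>: otherwise its component would be smaller than
  that of \<open>w\<close> in \<open>X - {x}\<close>.\<close>

lemma connected_graph_delete_in_minimal_component:
  assumes X: "connected_graph X E" "finite X" "x \<in> X" and x': "x' \<in> component (X - {x}) E w"
    and minimal: "\<And>v. v \<in> component (X - {x}) E w - {x'} \<Longrightarrow>
      card (component (X - {x}) E w) \<le> card (component (X - {x'}) E v)"
  shows "connected_graph (X - {x'}) E"
proof -
  let ?K = "component (X - {x}) E w"
  have K: "?K \<subseteq> X - {x}" using component_subset .
  then have "finite ?K" using X(2) finite_subset by blast
  have "x \<in> X - {x'}" using X(3) x' K by blast
  have reach_x: "reach (X - {x'}) E v x" if v: "v \<in> X - {x'}" for v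
  proof (cases "v \<in> ?K")
    case True
    show ?thesis
    proof (rule ccontr)
      assume "\<not> reach (X - {x'}) E v x"
      then have "component (X - {x'}) E v \<subseteq> ?K - {x'}" by (rule component_shrinks[OF True])
      then have "card (component (X - {x'}) E v) < card ?K"
        using \<open>finite ?K\<close> x' by (meson card_Diff1_less card_mono finite_Diff le_less_trans)
      then show False using minimal True v by fastforce
    qed
  next
    case False
    show ?thesis
    proof (cases "v = x")
      case True
      then show ?thesis using reach_refl[of v "X - {x'}" E] v by blast
    next
      case False
      then show ?thesis using reach_from_other_component[OF X(1,3) x'] v \<open>v \<notin> ?K\<close> by blast
    qed
  qed
  have "reach (X - {x'}) E a b" if "a \<in> X - {x'}" "b \<in> X - {x'}" for a b
    using reach_trans[OF reach_x[OF that(1)] reach_sym[OF reach_x[OF that(2)]]] .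
  then show ?thesis unfolding connected_graph_iff_reach using \<open>x \<in> X - {x'}\<close> by blast
qed

text \<open>Choose a boundary vertex \<open>x\<close> of \<open>X\<close> and \<open>w \<in> X - {x}\<close> such that the component of \<open>w\<close> in
  \<open>X - {x}\<close> is as small as possible; that component contains a removable boundary vertex.\<close>

lemma two_connected_removable_boundary_vertex:
  assumes G: "two_connected V E" and X: "X \<subseteq> V" "X \<noteq> V" "connected_graph X E" "2 \<le> card X"
  shows "\<exists>x'\<in>X. (\<exists>y\<in>V - X. {x', y} \<in> E) \<and> connected_graph (X - {x'}) E"
proof -
  have other: "X - {x} \<noteq> {}" for x
  proof
    assume "X - {x} = {}"
    then have "X \<subseteq> {x}" by blast
    then show False using X(4) card_mono[of "{x}" X] by simp
  qed
  obtain y where y: "y \<in> V - X" using X(1,2) by blast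
  define N where "N = {x\<in>X. \<exists>y\<in>V - X. {x, y} \<in> E}"
  define comp_card where "comp_card xw = card (component (X - {fst xw}) E (snd xw))" for xw
  have exit: "\<exists>x'\<in>component (X - {x}) E w. x' \<in> N" if xw: "x \<in> X" "w \<in> X - {x}" for x w
  proof -
    obtain x' y' where "x' \<in> component (X - {x}) E w" "y' \<in> V - X" "{x', y'} \<in> E"
      using two_connected_component_exit[OF G X(1) xw y] by blast
    then show ?thesis using component_subset[of "X - {x}" E w] unfolding N_def by blast
  qed
  obtain a where "a \<in> X" using X(4) by fastforce
  moreover obtain w where "w \<in> X - {a}" using other by blast
  ultimately obtain x0 where "x0 \<in> N" using exit by blast
  moreover obtain w0 where "w0 \<in> X - {x0}" using other by blast
  ultimately obtain x w where xw: "x \<in> N" "w \<in> X - {x}"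
    and least: "\<And>x' v. x' \<in> N \<Longrightarrow> v \<in> X - {x'} \<Longrightarrow> comp_card (x, w) \<le> comp_card (x', v)"
    using ex_has_least_nat[of "\<lambda>xw. fst xw \<in> N \<and> snd xw \<in> X - {fst xw}" "(x0, w0)" comp_card]
    by fastforce
  have "x \<in> X" using xw(1) unfolding N_def by blast
  then obtain x' where x': "x' \<in> component (X - {x}) E w" "x' \<in> N" using exit xw(2) by blast
  have "connected_graph (X - {x'}) E"
  proof (rule connected_graph_delete_in_minimal_component[OF X(3) _ \<open>x \<in> X\<close> x'(1)])
    show "finite X" using finite_subset[OF X(1) two_connected_finite[OF G]] .
    show "card (component (X - {x}) E w) \<le> card (component (X - {x'}) E v)"
      if "v \<in> component (X - {x}) E w - {x'}" for v
      using least[OF x'(2), of v] that component_subset[of "X - {x}" E w] unfolding comp_card_def by auto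
  qed
  then show ?thesis using x'(2) unfolding N_def by blast
qed

section \<open>Edge cuts and bonds\<close>

lemma edge_cut_of_complement:
  assumes "X \<subseteq> V"
  shows "edge_cut_of V E (V - X) = edge_cut_of V E X"
  using assms unfolding edge_cut_of_def by (auto simp: insert_commute)

lemma path_meets_edge_cut:
  assumes "is_path V E P" "a \<in> set P" "a \<in> X" "b \<in> set P" "b \<notin> X"
  shows "path_edges P \<inter> edge_cut_of V E X \<noteq> {}"
proof -
  obtain u v where uv: "u \<in> set P" "v \<in> set P" "u \<in> X" "v \<notin> X" "{u, v} \<in> path_edges P"
    using path_edges_crossing[OF assms(2-5)] by blast
  then have "{u, v} \<in> edge_cut_of V E X"
    using is_path_subset[OF assms(1)] path_edges_subset[OF assms(1)] unfolding edge_cut_of_def by blast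
  then show ?thesis using uv(5) by blast
qed

lemma connected_graph_subset_or_disjoint:
  assumes "connected_graph S E" "\<And>u v. u \<in> S \<Longrightarrow> v \<in> S \<Longrightarrow> {u, v} \<in> E \<Longrightarrow> u \<in> Z \<Longrightarrow> v \<in> Z"
  shows "S \<subseteq> Z \<or> S \<inter> Z = {}"
proof (rule ccontr)
  assume "\<not> (S \<subseteq> Z \<or> S \<inter> Z = {})"
  then obtain a b where ab: "a \<in> S" "a \<in> Z" "b \<in> S" "b \<notin> Z" by blast
  then obtain P where P: "is_path S E P" "hd P = a" "last P = b"
    using assms(1) unfolding connected_graph_def by blast
  have "a \<in> set P" "b \<in> set P" using P is_path_nonempty by fastforce+
  then show False using is_path_crossing_edge[OF P(1)] ab assms(2) by metis
qed

lemma connected_sides_edge_cut_is_bond: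
  assumes X: "X \<subseteq> V" "connected_graph X E" "connected_graph (V - X) E" and G: "connected_graph V E"
  shows "is_bond V E (edge_cut_of V E X)"
proof -
  have "edge_cut_of V E X \<noteq> {}"
  proof -
    obtain x y where "x \<in> X" "y \<in> V - X" using X(2,3) unfolding connected_graph_def by blast
    moreover obtain P where P: "is_path V E P" "hd P = x" "last P = y"
      using G X(1) \<open>x \<in> X\<close> \<open>y \<in> V - X\<close> unfolding connected_graph_def by blast
    moreover have "x \<in> set P" "y \<in> set P" using P is_path_nonempty by fastforce+
    ultimately show ?thesis using path_meets_edge_cut[OF P(1), of x X y] by blast
  qed
  moreover have "F = edge_cut_of V E X"
    if F: "is_edge_cut V E F" "F \<noteq> {}" "F \<subseteq> edge_cut_of V E X" for F
  proof -
    obtain Z where Z: "Z \<subseteq> V" "F = edge_cut_of V E Z" using F(1) unfolding is_edge_cut_def by blast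
    have same_side: "v \<in> Z" if "u \<in> V" "v \<in> V" "{u, v} \<in> E" "u \<in> X \<longleftrightarrow> v \<in> X" "u \<in> Z" for u v
    proof (rule ccontr)
      assume "v \<notin> Z"
      then have "{u, v} \<in> edge_cut_of V E X" using F(3) Z(2) that unfolding edge_cut_of_def by blast
      then show False using that(4) unfolding edge_cut_of_def by (auto simp: doubleton_eq_iff)
    qed
    have "X \<subseteq> Z \<or> X \<inter> Z = {}" "V - X \<subseteq> Z \<or> (V - X) \<inter> Z = {}"
      using connected_graph_subset_or_disjoint[OF X(2), of Z]
        connected_graph_subset_or_disjoint[OF X(3), of Z] same_side X(1) by blast+
    then have "Z = V \<or> Z = X \<or> Z = V - X \<or> Z = {}" using Z(1) X(1) by blast
    moreover have "edge_cut_of V E V = {}" "edge_cut_of V E {} = {}" unfolding edge_cut_of_def by auto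
    ultimately show ?thesis using F(2) Z(2) edge_cut_of_complement[OF X(1)] by auto
  qed
  ultimately show ?thesis using X(1) unfolding is_bond_def is_edge_cut_def by blast
qed

section \<open>Long paths in a 2-connected graph\<close>

lemma reach_within_path:
  assumes "is_path S E P" "u \<in> set P" "v \<in> set P"
  shows "reach (set P) E u v"
proof -
  have "is_path (set P) E P" using is_path_restrict[OF assms(1)] by blast
  then show ?thesis using reach_prefix assms(2,3) reach_sym reach_trans by metis
qed

lemma less_4_cases: "(i::nat) < 4 \<Longrightarrow> i = 0 \<or> i = 1 \<or> i = 2 \<or> i = 3"
  by auto

lemma sum_4_perm:
  fixes f :: "nat \<Rightarrow> nat"
  assumes "i < 4" "j < 4" "k < 4" "l < 4" "distinct [i, j, k, l]"
  shows "f i + f j + f k + f l = f 0 + f 1 + f 2 + f 3"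
  using less_4_cases[OF assms(1)] less_4_cases[OF assms(2)] less_4_cases[OF assms(3)]
    less_4_cases[OF assms(4)] assms(5)
  by (elim disjE) simp_all

text \<open>Of the pairs \<open>{0, 1}\<close> and \<open>{2, 3}\<close>, one avoids \<open>j\<close>.\<close>

lemma pair_avoiding_4:
  fixes f :: "nat \<Rightarrow> nat"
  assumes "i < 4" "j < 4" "k < 4" "l < 4" "distinct [i, j, k, l]" "c \<le> f 0 + f 1" "c \<le> f 2 + f 3"
  shows "c \<le> f i + f k \<or> c \<le> f i + f l \<or> c \<le> f k + f l"
  using less_4_cases[OF assms(1)] less_4_cases[OF assms(2)] less_4_cases[OF assms(3)]
    less_4_cases[OF assms(4)] assms(5-7)
  by (elim disjE) (simp_all add: add.commute)

lemma exists_other_index_4: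
  assumes "(i::nat) < 4" "j < 4" "k < 4" "distinct [i, j, k]"
  shows "\<exists>l<4. distinct [i, j, k, l]"
proof -
  define l where "l = (if 0 \<notin> {i, j, k} then 0 else if 1 \<notin> {i, j, k} then 1
    else if 2 \<notin> {i, j, k} then 2 else (3::nat))"
  have "l < 4 \<and> distinct [i, j, k, l]"
    using less_4_cases[OF assms(1)] less_4_cases[OF assms(2)] less_4_cases[OF assms(3)] assms(4)
    unfolding l_def by (elim disjE) simp_all
  then show ?thesis by blast
qed

lemma exists_other_indices_4:
  assumes "(i::nat) < 4" "j < 4" "i \<noteq> j"
  shows "\<exists>k<4. \<exists>l<4. distinct [i, j, k, l]"
proof -
  define k where "k = (if 0 \<notin> {i, j} then 0 else if 1 \<notin> {i, j} then 1 else (2::nat))"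
  have "k < 4 \<and> distinct [i, j, k]"
    using less_4_cases[OF assms(1)] less_4_cases[OF assms(2)] assms(3)
    unfolding k_def by (elim disjE) simp_all
  then show ?thesis using exists_other_index_4 assms by blast
qed

locale bounded_path_graph =
  fixes V :: "'a set" and E :: "'a set set" and p :: nat
  assumes two_connected: "two_connected V E"
    and path_length_le: "is_path V E P \<Longrightarrow> path_length P \<le> p"
begin

text \<open>\<open>W\<close> can be prolonged by either part of \<open>R\<close> at its start and by either part of \<open>Q\<close> at its end.\<close>

lemma ab_path_reroute_bound:
  assumes R: "is_path V E R" and Q: "is_path V E Q" and disj: "set R \<inter> set Q = {}"
    and W: "ab_path V E (set R) (set Q) W"
    and R_split: "R = R1 @ hd W # R2" and Q_split: "Q = Q1 @ last W # Q2"
  shows "max (length R1) (length R2) + max (length Q1) (length Q2) < p"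
proof -
  note W' = ab_pathD[OF W]
  have Wne: "W \<noteq> []" using is_path_nonempty[OF W'(1)] .
  have R_W: "is_path V E (R' @ W)" if "R' \<in> {R1, rev R2}" for R'
  proof -
    have "is_path V E (rev R)" using R by simp
    then have "is_path V E (R1 @ hd W # R2)" "is_path V E (rev R2 @ hd W # rev R1)"
      using R R_split by simp_all
    moreover have "set W \<inter> set (R1 @ hd W # R2) = {hd W}" "set W \<inter> set (rev R2 @ hd W # rev R1) = {hd W}"
      using W'(4) R_split by auto
    ultimately show ?thesis
      using that is_path_splice[OF _ W'(1) refl] by auto
  qed
  have W_Q: "is_path V E (W @ Q')" if "Q' \<in> {Q2, rev Q1}" for Q'
  proof -
    have "is_path V E (rev Q)" using Q by simp
    then have "is_path V E (Q1 @ last W # Q2)" "is_path V E (rev Q2 @ last W # rev Q1)"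
      using Q Q_split by simp_all
    moreover have "set W \<inter> set (Q1 @ last W # Q2) = {last W}"
      "set W \<inter> set (rev Q2 @ last W # rev Q1) = {last W}"
      using W'(5) Q_split by auto
    ultimately show ?thesis
      using that is_path_splice_end[OF _ W'(1) refl] by auto
  qed
  have "hd W \<noteq> last W" using W'(2,3) disj by auto
  then have "2 \<le> length W" using Wne by (cases W rule: remdups_adj.cases) auto
  moreover have "length R' + length W + length Q' \<le> Suc p"
    if "R' \<in> {R1, rev R2}" "Q' \<in> {Q2, rev Q1}" for R' Q'
  proof -
    have "set R' \<inter> set Q' = {}" using that disj R_split Q_split by auto
    then have "path_length (R' @ W @ Q') \<le> p"
      using is_path_glue[OF R_W[OF that(1)] W_Q[OF that(2)] Wne] path_length_le by blast
    then show ?thesis by (simp add: path_length_def)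
  qed
  ultimately have "length R' + length Q' < p" if "R' \<in> {R1, rev R2}" "Q' \<in> {Q2, rev Q1}" for R' Q'
    using that by fastforce
  from this[of R1 Q2] this[of R1 "rev Q1"] this[of "rev R2" Q2] this[of "rev R2" "rev Q1"]
  show ?thesis by (simp add: max_def)
qed

text \<open>Two disjoint long paths would be joined by two \<open>R\<close>--\<open>Q\<close> paths leaving \<open>R\<close> at different
  vertices (the second one found in \<open>G - a\<close>); rerouting along both yields a path longer than \<open>p\<close>.\<close>

lemma long_paths_intersect:
  assumes "2 \<le> p"
    and R: "is_path V E R" "p - 1 \<le> path_length R"
    and Q: "is_path V E Q" "p - 1 \<le> path_length Q"
  shows "set R \<inter> set Q \<noteq> {}"
proof
  assume disj: "set R \<inter> set Q = {}"
  have len: "p \<le> length R" "p \<le> length Q" using R(2) Q(2) assms(1) by (auto simp: path_length_def)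
  obtain r q where rq: "r \<in> set R" "q \<in> set Q"
    using is_path_nonempty[OF R(1)] is_path_nonempty[OF Q(1)] by (meson last_in_set)
  have RV: "set R \<subseteq> V" and QV: "set Q \<subseteq> V" using R(1) Q(1) by (simp_all add: is_path_subset)
  obtain W1 where W1: "ab_path V E (set R) (set Q) W1"
    using connected_graph_ab_path[OF two_connected_connected[OF two_connected], of r "set R" q "set Q"]
      rq RV QV by blast
  define a where "a = hd W1"
  have aR: "a \<in> set R" using ab_pathD(2)[OF W1] by (simp add: a_def)
  have "2 \<le> card (set R)" using len assms(1) distinct_card[OF is_path_distinct[OF R(1)]] by simp
  then obtain r' where r': "r' \<in> set R" "r' \<noteq> a"
    by (metis card_le_Suc0_iff_eq finite_set not_less_eq_eq numeral_2_eq_2)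
  have "a \<in> V" "a \<noteq> q" using aR RV rq disj by auto
  then obtain W2 where W2: "ab_path (V - {a}) E (set R - {a}) (set Q) W2"
    using connected_graph_ab_path[OF two_connected_delete[OF two_connected], of a r' "set R - {a}" q "set Q"]
      r' rq RV QV by blast
  have "a \<notin> set W2" using is_path_subset[OF ab_pathD(1)[OF W2]] by blast
  then have W2': "ab_path V E (set R) (set Q) W2" and "hd W2 \<noteq> a"
    using W2 is_path_mono[of "V - {a}" E W2 V] unfolding ab_path_def by blast+
  obtain R1 R2 where R12: "R = R1 @ hd W1 # R2" using aR a_def by (meson split_list)
  obtain R1' R2' where R12': "R = R1' @ hd W2 # R2'" using ab_pathD(2)[OF W2'] by (meson split_list)
  obtain Q1 Q2 where Q12: "Q = Q1 @ last W1 # Q2" using ab_pathD(3)[OF W1] by (meson split_list)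
  obtain Q1' Q2' where Q12': "Q = Q1' @ last W2 # Q2'" using ab_pathD(3)[OF W2'] by (meson split_list)
  have "length R1 \<noteq> length R1'"
    using R12 R12' \<open>hd W2 \<noteq> a\<close> a_def nth_append_length by metis
  moreover note ab_path_reroute_bound[OF R(1) Q(1) disj W1 R12 Q12]
    ab_path_reroute_bound[OF R(1) Q(1) disj W2' R12' Q12']
  moreover have "length R = length R1 + length R2 + 1" using R12 by simp
  moreover have "length R = length R1' + length R2' + 1" using R12' by simp
  moreover have "length Q = length Q1 + length Q2 + 1" using Q12 by simp
  moreover have "length Q = length Q1' + length Q2' + 1" using Q12' by simp
  ultimately show False using len by (simp add: max_def split: if_splits)
qed

end

section \<open>Four arms at a vertex\<close>

locale four_arms = bounded_path_graph +
  fixes x :: 'a and L :: "nat \<Rightarrow> 'a list"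
  assumes arm_path: "i < 4 \<Longrightarrow> is_path V E (x # L i)"
    and arms_disjoint: "i < 4 \<Longrightarrow> j < 4 \<Longrightarrow> i \<noteq> j \<Longrightarrow> set (L i) \<inter> set (L j) = {}"
begin

lemma center_notin_arm: "i < 4 \<Longrightarrow> x \<notin> set (L i)"
  using is_path_distinct[OF arm_path] by simp

lemma arm_subset: "i < 4 \<Longrightarrow> set (L i) \<subseteq> V - {x}"
  using is_path_subset[OF arm_path] center_notin_arm by auto

lemma arm_is_path: "i < 4 \<Longrightarrow> L i \<noteq> [] \<Longrightarrow> is_path V E (L i)"
  using arm_path is_path_appendD2[of V E "[x]" "L i"] by simp

lemma prepend_arm:
  assumes "k < 4" "is_path V E (x # T)" "set (L k) \<inter> set (x # T) = {}"
  shows "is_path V E (rev (L k) @ x # T)"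
proof -
  have "is_path V E (rev (L k) @ [x])" using arm_path[OF assms(1)] is_path_rev[of V E "x # L k"] by simp
  then show ?thesis using is_path_glue[of V E "rev (L k)" "[x]" T] assms(2,3) by auto
qed

lemma arm_pair_bound:
  assumes "i < 4" "j < 4" "i \<noteq> j"
  shows "length (L i) + length (L j) \<le> p"
proof -
  have "is_path V E (rev (L i) @ x # L j)"
    using prepend_arm[OF assms(1) arm_path[OF assms(2)]] arms_disjoint[OF assms] center_notin_arm[OF assms(1)]
    by auto
  then show ?thesis using path_length_le by (fastforce simp: path_length_def)
qed

text \<open>A detour \<open>W\<close> from arm \<open>i\<close> to arm \<open>j\<close> avoiding arm \<open>k\<close> yields the path
  \<open>rev (L k) @ x # A1 @ W @ B2\<close>.\<close>

lemma detour_bound: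
  assumes ijk: "i < 4" "j < 4" "k < 4" "distinct [i, j, k]"
    and W: "is_path V E W" "x \<notin> set W"
    and Li: "L i = A1 @ hd W # A2" and Lj: "L j = B1 @ last W # B2"
    and Wi: "set W \<inter> set (L i) = {hd W}" and Wj: "set W \<inter> set (L j) = {last W}"
    and Wk: "set W \<inter> set (L k) = {}"
  shows "length (L k) + length A1 + length W + length B2 \<le> p"
proof -
  have "is_path V E ((x # A1) @ hd W # A2)" using arm_path[OF ijk(1)] Li by simp
  moreover have "set W \<inter> set ((x # A1) @ hd W # A2) = {hd W}" using Wi Li W(2) by auto
  ultimately have xW: "is_path V E ((x # A1) @ W)" using is_path_splice[OF _ W(1) refl] by blast
  have "is_path V E (B1 @ last W # B2)" using arm_is_path[OF ijk(2)] Lj by simp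
  moreover have "set W \<inter> set (B1 @ last W # B2) = {last W}" using Wj Lj by simp
  ultimately have WB: "is_path V E (W @ B2)" using is_path_splice_end[OF _ W(1) refl] by blast
  have "set (L i) \<inter> set (L j) = {}" "x \<notin> set (L j)"
    using arms_disjoint center_notin_arm ijk by auto
  then have "set (x # A1) \<inter> set B2 = {}" using Li Lj by auto
  then have "is_path V E ((x # A1) @ W @ B2)"
    using is_path_glue[OF xW WB] is_path_nonempty[OF W(1)] by blast
  moreover have "set (L k) \<inter> set (x # A1 @ W @ B2) = {}"
    using arms_disjoint[of k i] arms_disjoint[of k j] ijk Wk center_notin_arm[OF ijk(3)] Li Lj by auto
  ultimately have "is_path V E (rev (L k) @ x # A1 @ W @ B2)" using prepend_arm[OF ijk(3)] by simp
  then show ?thesis using path_length_le by (fastforce simp: path_length_def)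
qed

lemma edge_bound:
  assumes ijk: "i < 4" "j < 4" "k < 4" "distinct [i, j, k]"
    and ab: "{a, b} \<in> E" and Li: "L i = A1 @ a # A2" and Lj: "L j = B1 @ b # B2"
  shows "length (L k) + length A1 + length B2 + 2 \<le> p"
proof -
  have "set (L i) \<inter> set (L j) = {}" "set (L i) \<inter> set (L k) = {}" "set (L j) \<inter> set (L k) = {}"
    using arms_disjoint ijk by auto
  moreover have "a \<in> set (L i)" "b \<in> set (L j)" using Li Lj by auto
  ultimately have ab_arms: "a \<in> set (L i)" "b \<in> set (L j)" "set (L i) \<inter> set (L j) = {}"
    "set (L i) \<inter> set (L k) = {}" "set (L j) \<inter> set (L k) = {}" by blast+
  then have "a \<in> V" "b \<in> V" "a \<noteq> b" "x \<notin> set [a, b]"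
    using arm_subset[OF ijk(1)] arm_subset[OF ijk(2)] center_notin_arm ijk by auto
  then have "length (L k) + length A1 + length [a, b] + length B2 \<le> p"
    using ab ab_arms Li Lj by (intro detour_bound[OF ijk]) (auto simp: is_path_Cons_Cons)
  then show ?thesis by simp
qed

lemma two_edge_bound:
  assumes ijkl: "i < 4" "j < 4" "k < 4" "l < 4" "distinct [i, j, k, l]"
    and Li: "L i = A1 @ a # A2" and Lk: "L k = C1 @ c # C2"
    and b: "b \<in> set (L j)" "b' \<in> set (L j)" and e: "{a, b} \<in> E" "{b', c} \<in> E"
  shows "length (L l) + length A1 + length C2 + 3 \<le> p"
proof -
  obtain S where S: "is_path (set (L j)) E S" "hd S = b" "last S = b'"
  proof -
    have "L j \<noteq> []" using b by auto
    then show ?thesis using reach_within_path[OF arm_is_path[OF ijkl(2)] b] that unfolding reach_def by blast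
  qed
  have disj: "set (L m) \<inter> set (L m') = {}" if "m \<in> {i, j, k, l}" "m' \<in> {i, j, k, l}" "m \<noteq> m'" for m m'
    using arms_disjoint that ijkl by auto
  have SV: "set S \<subseteq> set (L j)" using is_path_subset[OF S(1)] .
  have ac: "a \<in> set (L i)" "c \<in> set (L k)" using Li Lk by auto
  then have "a \<notin> set (S @ [c])" "c \<notin> set S" "a \<in> V" "c \<in> V"
    using SV disj[of i j] disj[of i k] disj[of k j] arm_subset[OF ijkl(1)] arm_subset[OF ijkl(3)] ijkl
    by auto
  moreover have "is_path V E S" using is_path_restrict[OF S(1)] SV arm_subset[OF ijkl(2)] by blast
  ultimately have "is_path V E (S @ [c])" using e(2) S(3) by (intro is_path_appendI) auto
  then have "is_path V E ([a] @ S @ [c])"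
    using \<open>a \<in> V\<close> \<open>a \<notin> set (S @ [c])\<close> e(1) S(2) is_path_nonempty[OF S(1)]
    by (intro is_path_appendI[of V E "[a]"]) auto
  moreover have "set (a # S @ [c]) \<inter> set (L i) = {a}" "set (a # S @ [c]) \<inter> set (L k) = {c}"
    "set (a # S @ [c]) \<inter> set (L l) = {}" "x \<notin> set (a # S @ [c])"
    using SV ac disj[of i k] disj[of j i] disj[of j k] disj[of i l] disj[of j l] disj[of k l]
      center_notin_arm ijkl by auto
  ultimately have "length (L l) + length A1 + length (a # S @ [c]) + length C2 \<le> p"
    using Li Lk ijkl by (intro detour_bound[of i k l]) auto
  then show ?thesis using is_path_nonempty[OF S(1)] by (cases S) auto
qed

text \<open>Arms \<open>0, 1\<close> and arms \<open>2, 3\<close> are the halves of two long paths through \<open>x\<close>.\<close>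

context
  assumes long_pairs: "p - 1 \<le> length (L 0) + length (L 1)" "p - 1 \<le> length (L 2) + length (L 3)"
    and p_ge_3: "3 \<le> p"
begin

text \<open>Both directions of \<open>W\<close>, combined with each of the two remaining arms, give four detour
  bounds whose sum forces \<open>length W \<le> 2\<close>.\<close>

lemma detour_is_edge:
  assumes ij: "i < 4" "j < 4" "i \<noteq> j"
    and W: "is_path V E W" "x \<notin> set W" "set W \<inter> set (L i) = {hd W}" "set W \<inter> set (L j) = {last W}"
      "\<And>m. m < 4 \<Longrightarrow> m \<noteq> i \<Longrightarrow> m \<noteq> j \<Longrightarrow> set W \<inter> set (L m) = {}"
  shows "{hd W, last W} \<in> E"
proof -
  obtain k l where kl: "k < 4" "l < 4" "distinct [i, j, k, l]" using exists_other_indices_4[OF ij] by blast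
  obtain A1 A2 where Li: "L i = A1 @ hd W # A2" using W(3) by (metis Int_iff singletonI split_list)
  obtain B1 B2 where Lj: "L j = B1 @ last W # B2" using W(4) by (metis Int_iff singletonI split_list)
  have Wne: "W \<noteq> []" using is_path_nonempty[OF W(1)] .
  have rev_W: "is_path V E (rev W)" "x \<notin> set (rev W)" "hd (rev W) = last W" "last (rev W) = hd W"
    "set (rev W) \<inter> set (L j) = {hd (rev W)}" "set (rev W) \<inter> set (L i) = {last (rev W)}"
    using W Wne by (auto simp: hd_rev last_rev)
  have "length (L m) + length A1 + length W + length B2 \<le> p"
    "length (L m) + length B1 + length W + length A2 \<le> p" if "m \<in> {k, l}" for m
    using detour_bound[of i j m, OF _ _ _ _ W(1,2) Li Lj W(3,4) W(5)]
      detour_bound[of j i m, OF _ _ _ _ rev_W(1,2) _ _ rev_W(5,6)] ij kl that Li Lj rev_W(3,4) W(5)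
    by auto
  moreover have "length A1 + length A2 + 1 = length (L i)" "length B1 + length B2 + 1 = length (L j)"
    using Li Lj by simp_all
  moreover have "length (L i) + length (L j) + length (L k) + length (L l) =
      length (L 0) + length (L 1) + length (L 2) + length (L 3)"
    using sum_4_perm[where f = "\<lambda>m. length (L m)", OF ij(1,2) kl] by simp
  ultimately have "length W \<le> 2" using long_pairs by fastforce
  moreover have "hd W \<noteq> last W" using W(3,4) arms_disjoint[OF ij] by auto
  ultimately obtain u v where "W = [u, v]" using Wne by (cases W rule: remdups_adj.cases) auto
  then show ?thesis using W(1) by (simp add: is_path_Cons_Cons)
qed

lemma no_chained_arm_edges:
  assumes ijk: "i < 4" "j < 4" "k < 4" "distinct [i, j, k]"
    and mem: "a \<in> set (L i)" "b \<in> set (L j)" "b' \<in> set (L j)" "c \<in> set (L k)"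
    and e: "{a, b} \<in> E" "{b', c} \<in> E"
  shows False
proof -
  obtain l where l: "l < 4" "distinct [i, j, k, l]" using exists_other_index_4[OF ijk] by blast
  obtain A1 A2 where Li: "L i = A1 @ a # A2" using mem(1) by (meson split_list)
  obtain B1 B2 where Lj: "L j = B1 @ b # B2" using mem(2) by (meson split_list)
  obtain B1' B2' where Lj': "L j = B1' @ b' # B2'" using mem(3) by (meson split_list)
  obtain C1 C2 where Lk: "L k = C1 @ c # C2" using mem(4) by (meson split_list)
  have e': "{b, a} \<in> E" "{c, b'} \<in> E" using e by (simp_all add: insert_commute)
  have ab: "length (L m) + length A1 + length B2 + 2 \<le> p" "length (L m) + length B1 + length A2 + 2 \<le> p"
    if "m \<in> {k, l}" for m
    using edge_bound[of i j m, OF _ _ _ _ e(1) Li Lj] edge_bound[of j i m, OF _ _ _ _ e'(1) Lj Li]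
      ijk l that by auto
  have bc: "length (L m) + length B1' + length C2 + 2 \<le> p"
    "length (L m) + length C1 + length B2' + 2 \<le> p" if "m \<in> {i, l}" for m
    using edge_bound[of j k m, OF _ _ _ _ e(2) Lj' Lk] edge_bound[of k j m, OF _ _ _ _ e'(2) Lk Lj']
      ijk l that by auto
  note ab[of k, simplified] ab[of l, simplified] bc[of i, simplified] bc[of l, simplified]
  moreover have "length (L l) + length A1 + length C2 + 3 \<le> p"
    using two_edge_bound[OF ijk(1-3) l(1) l(2) Li Lk mem(2,3) e] .
  moreover have "length (L l) + length C1 + length A2 + 3 \<le> p"
    using two_edge_bound[of k j i l, OF _ _ _ _ _ Lk Li mem(3,2) e'(2,1)] ijk l by auto
  moreover have "length A1 + length A2 + 1 = length (L i)" using Li by simp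
  moreover have "length B1 + length B2 + 1 = length (L j)" using Lj by simp
  moreover have "length B1' + length B2' + 1 = length (L j)" using Lj' by simp
  moreover have "length C1 + length C2 + 1 = length (L k)" using Lk by simp
  moreover have "length (L i) + length (L j) + length (L k) + length (L l) =
      length (L 0) + length (L 1) + length (L 2) + length (L 3)"
    using sum_4_perm[where f = "\<lambda>m. length (L m)", OF ijk(1-3) l] by simp
  moreover have "p - 1 \<le> length (L i) + length (L k) \<or> p - 1 \<le> length (L i) + length (L l) \<or>
      p - 1 \<le> length (L k) + length (L l)"
    using pair_avoiding_4[where f = "\<lambda>m. length (L m)", OF ijk(1-3) l] long_pairs by simp
  ultimately show False using long_pairs by (elim disjE) linarith+
qed

lemma arms_linked_by_edge:
  assumes I: "I \<subseteq> {..<4}" "i \<in> I" "L i \<noteq> []" and j: "j < 4" "j \<notin> I" "L j \<noteq> []"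
  shows "\<exists>i'\<in>I. \<exists>j'<4. j' \<notin> I \<and> (\<exists>u\<in>set (L i'). \<exists>v\<in>set (L j'). {u, v} \<in> E)"
proof -
  define A where "A = (\<Union>m\<in>I. set (L m))"
  define B where "B = (\<Union>m\<in>{..<4} - I. set (L m))"
  have "x \<in> V" using is_path_subset[OF arm_path[of 0]] by simp
  moreover have "hd (L i) \<in> (V - {x}) \<inter> A"
    using I arm_subset[of i] hd_in_set[OF I(3)] unfolding A_def by blast
  moreover have "hd (L j) \<in> (V - {x}) \<inter> B"
    using j arm_subset[of j] hd_in_set[OF j(3)] unfolding B_def by blast
  ultimately obtain W where W: "ab_path (V - {x}) E A B W"
    using connected_graph_ab_path[OF two_connected_delete[OF two_connected]] by metis
  note W' = ab_pathD[OF W]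
  obtain i' where i': "i' \<in> I" "hd W \<in> set (L i')" using W'(2) unfolding A_def by blast
  obtain j' where j': "j' < 4" "j' \<notin> I" "last W \<in> set (L j')" using W'(3) unfolding B_def by blast
  have "i' < 4" "i' \<noteq> j'" using i' j' I(1) by auto
  have "set W \<inter> set (L i') = {hd W}" using W'(4) i' unfolding A_def by blast
  moreover have "set W \<inter> set (L j') = {last W}" using W'(5) j' unfolding B_def by blast
  moreover have "set W \<inter> set (L m) = {}" if "m < 4" "m \<noteq> i'" "m \<noteq> j'" for m
  proof (cases "m \<in> I")
    case True
    then have "set W \<inter> set (L m) \<subseteq> {hd W}" using W'(4) unfolding A_def by blast
    then show ?thesis using arms_disjoint[OF that(1) \<open>i' < 4\<close> that(2)] i'(2) by blast
  next
    case False
    then have "set W \<inter> set (L m) \<subseteq> {last W}" using W'(5) that(1) unfolding B_def by blast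
    then show ?thesis using arms_disjoint[OF that(1) j'(1) that(3)] j'(3) by blast
  qed
  moreover have "is_path V E W" "x \<notin> set W"
    using W'(1) is_path_subset[OF W'(1)] is_path_mono[of "V - {x}" E W V] by auto
  ultimately have "{hd W, last W} \<in> E"
    using detour_is_edge[OF \<open>i' < 4\<close> j'(1) \<open>i' \<noteq> j'\<close>] by blast
  then show ?thesis using i' j' by blast
qed

lemma third_nonempty_arm:
  assumes "i < 4" "j < 4" "i \<noteq> j"
  shows "\<exists>k<4. k \<notin> {i, j} \<and> L k \<noteq> []"
proof (rule ccontr)
  assume "\<not> ?thesis"
  then have "L m = []" if "m < 4" "m \<notin> {i, j}" for m using that by blast
  moreover obtain k l where "k < 4" "l < 4" "distinct [i, j, k, l]"
    using exists_other_indices_4[OF assms] by auto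
  moreover note sum_4_perm[where f = "\<lambda>m. length (L m)", of i j k l]
  ultimately have "length (L i) + length (L j) = length (L 0) + length (L 1) + length (L 2) + length (L 3)"
    using assms by auto
  then show False using arm_pair_bound[OF assms] long_pairs p_ge_3 by simp
qed

text \<open>In \<open>G - x\<close> some arm of the first path is linked to another arm, and these two arms to a
  third one; the two linking edges then chain through one arm.\<close>

lemma long_arm_pairs_absurd: False
proof -
  have "L 0 \<noteq> [] \<or> L 1 \<noteq> []" "L 2 \<noteq> [] \<or> L 3 \<noteq> []" using long_pairs p_ge_3 by auto
  moreover have "(0::nat) < 2" "(1::nat) < 2" "(2::nat) < 4" "(3::nat) < 4" "(2::nat) \<le> 3" by simp_all
  ultimately obtain i j0 where i: "i < 2" "L i \<noteq> []" and j0: "j0 < 4" "2 \<le> j0" "L j0 \<noteq> []"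
    by (metis order_refl)
  obtain j a b where j: "j < 4" "j \<noteq> i" "a \<in> set (L i)" "b \<in> set (L j)" and ab: "{a, b} \<in> E"
    using arms_linked_by_edge[of "{i}" i j0] i j0 by auto
  obtain k0 where k0: "k0 < 4" "k0 \<notin> {i, j}" "L k0 \<noteq> []"
    using third_nonempty_arm[of i j] i j by auto
  obtain i' k u c where i': "i' \<in> {i, j}" and k: "k < 4" "k \<notin> {i, j}"
    and uc: "u \<in> set (L i')" "c \<in> set (L k)" "{u, c} \<in> E"
    using arms_linked_by_edge[of "{i, j}" i k0] i j k0 by auto
  show False
  proof (cases "i' = j")
    case True
    then show False using no_chained_arm_edges[of i j k a b u c] i j k ab uc by auto
  next
    case False
    then have "i' = i" using i' by simp
    moreover have "{b, a} \<in> E" using ab by (simp add: insert_commute)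
    ultimately show False using no_chained_arm_edges[of j i k b a u c] i j k uc by auto
  qed
qed

end

end

section \<open>Separating the long paths\<close>

context bounded_path_graph
begin

text \<open>Two long paths through a common vertex \<open>x\<close> and otherwise disjoint form four arms at \<open>x\<close>.\<close>

lemma long_paths_meet_twice:
  assumes "3 \<le> p"
    and R: "is_path V E R" "p - 1 \<le> path_length R"
    and Q: "is_path V E Q" "p - 1 \<le> path_length Q"
  shows "\<not> set R \<inter> set Q \<subseteq> {x}"
proof
  assume RQ: "set R \<inter> set Q \<subseteq> {x}"
  have "set R \<inter> set Q \<noteq> {}" using long_paths_intersect assms by simp
  then have "x \<in> set R" "x \<in> set Q" using RQ by auto
  then obtain R1 R2 Q1 Q2 where R12: "R = R1 @ x # R2" and Q12: "Q = Q1 @ x # Q2"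
    by (meson split_list)
  define L where "L i = [rev R1, R2, rev Q1, Q2] ! i" for i
  interpret four_arms V E p x L
  proof
    have "is_path V E (x # rev R1)" "is_path V E (x # R2)"
      using R(1) is_path_appendD1[of V E "R1 @ [x]" R2] is_path_appendD2[of V E R1 "x # R2"]
      unfolding R12 by (simp_all flip: is_path_rev[of V E "R1 @ [x]"])
    moreover have "is_path V E (x # rev Q1)" "is_path V E (x # Q2)"
      using Q(1) is_path_appendD1[of V E "Q1 @ [x]" Q2] is_path_appendD2[of V E Q1 "x # Q2"]
      unfolding Q12 by (simp_all flip: is_path_rev[of V E "Q1 @ [x]"])
    ultimately show "is_path V E (x # L i)" if "i < 4" for i
      using less_4_cases[OF that] by (auto simp: L_def)
  next
    have "distinct (R1 @ x # R2)" "distinct (Q1 @ x # Q2)"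
      using is_path_distinct R(1) Q(1) R12 Q12 by blast+
    then have "set R1 \<inter> set R2 = {}" "set Q1 \<inter> set Q2 = {}"
      "(set R1 \<union> set R2) \<inter> (set Q1 \<union> set Q2) = {}"
      using RQ R12 Q12 by auto
    then show "set (L i) \<inter> set (L j) = {}" if "i < 4" "j < 4" "i \<noteq> j" for i j
      using less_4_cases[OF that(1)] less_4_cases[OF that(2)] that(3)
      by (elim disjE) (auto simp: L_def)
  qed
  have "p - 1 \<le> length (L 0) + length (L 1)" "p - 1 \<le> length (L 2) + length (L 3)"
    using R(2) Q(2) R12 Q12 by (simp_all add: L_def path_length_def)
  then show False using long_arm_pairs_absurd assms(1) by blast
qed

lemma longest_path_end_neighbours:
  assumes P: "is_path V E P" "path_length P = p" and u: "u \<in> V" "u \<notin> set P"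
  shows "{hd P, u} \<notin> E" "{last P, u} \<notin> E"
proof -
  have len: "length P = Suc p" using P(2) is_path_nonempty[OF P(1)] by (cases P) (auto simp: path_length_def)
  show "{hd P, u} \<notin> E"
  proof
    assume "{hd P, u} \<in> E"
    then have "is_path V E ([u] @ P)" using P(1) u by (intro is_path_appendI) (auto simp: insert_commute)
    then show False using path_length_le len by (fastforce simp: path_length_def)
  qed
  show "{last P, u} \<notin> E"
  proof
    assume "{last P, u} \<in> E"
    then have "is_path V E (P @ [u])" using P(1) u by (intro is_path_appendI) auto
    then show False using path_length_le len by (fastforce simp: path_length_def)
  qed
qed

text \<open>A longest path with at most three vertices would have an outside neighbour only at its middle
  vertex \<open>a\<close>; a path in \<open>G - a\<close> from an end to that neighbour then extends it at an end.\<close>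

lemma longest_path_length_ge_3:
  assumes "4 \<le> card V" and P: "is_path V E P" "path_length P = p"
  shows "3 \<le> p"
proof (rule ccontr)
  assume "\<not> 3 \<le> p"
  then have len: "length P \<le> 3" using P(2) by (simp add: path_length_def)
  have Pne: "P \<noteq> []" and PV: "set P \<subseteq> V" using is_path_nonempty[OF P(1)] is_path_subset[OF P(1)] by auto
  have "card (set P) \<le> 3" using card_length[of P] len by linarith
  then have "\<not> V \<subseteq> set P" using assms(1) card_mono[of "set P" V] by auto
  then obtain w where w: "w \<in> V" "w \<notin> set P" by blast
  have "hd P \<in> V" using PV Pne by auto
  then obtain Q where Q: "is_path V E Q" "hd Q = hd P" "last Q = w"
    using two_connected_connected[OF two_connected] w(1) unfolding connected_graph_def by blast
  have "hd P \<in> set Q" "w \<in> set Q" "hd P \<in> set P"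
    using Q(2,3) hd_in_set[OF is_path_nonempty[OF Q(1)]] last_in_set[OF is_path_nonempty[OF Q(1)]] Pne
    by auto
  then obtain a b where ab: "a \<in> set P" "b \<in> V" "b \<notin> set P" "{a, b} \<in> E"
    using is_path_crossing_edge[OF Q(1), of "hd P" "set P" w] w(2) by blast
  then have "a \<noteq> hd P" "a \<noteq> last P" using longest_path_end_neighbours[OF P ab(2,3)] by auto
  then obtain v0 v2 where P3: "P = [v0, a, v2]"
    using len ab(1) by (cases P rule: remdups_adj.cases; cases "tl (tl P)") auto
  have "a \<in> V" "v0 \<in> V - {a}" "b \<in> V - {a}" using PV P3 is_path_distinct[OF P(1)] ab by auto
  then obtain Q' where Q': "is_path (V - {a}) E Q'" "hd Q' = v0" "last Q' = b"
    using two_connected_delete[OF two_connected] unfolding connected_graph_def by blast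
  have "v0 \<in> set Q'" "b \<in> set Q'" using Q'(2,3) is_path_nonempty[OF Q'(1)] by auto
  then obtain c d where cd: "c \<in> {v0, v2}" "d \<in> V - {a}" "d \<notin> {v0, v2}" "{c, d} \<in> E"
    using is_path_crossing_edge[OF Q'(1), of v0 "{v0, v2}" b] ab(3) P3 by auto
  then have "d \<in> V" "d \<notin> set P" using P3 by auto
  then show False using longest_path_end_neighbours[OF P] cd(1,4) P3 by auto
qed

definition short_side :: "'a set \<Rightarrow> bool" where
  "short_side Y \<longleftrightarrow> Y \<subseteq> V \<and> connected_graph Y E \<and> connected_graph (V - Y) E \<and>
     (\<forall>Q. is_path Y E Q \<longrightarrow> path_length Q < p - 1)"

lemma short_side_singleton:
  assumes "3 \<le> p" "w \<in> V"
  shows "short_side {w}"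
proof -
  have "path_length Q < p - 1" if "is_path {w} E Q" for Q
  proof -
    have "card (set Q) \<le> 1" using is_path_subset[OF that] card_mono[of "{w}" "set Q"] by simp
    then show ?thesis using distinct_card[OF is_path_distinct[OF that]] assms(1)
      by (simp add: path_length_def)
  qed
  moreover have "connected_graph {w} E" unfolding connected_graph_iff_reach by (simp add: reach_refl)
  ultimately show ?thesis
    using assms(2) two_connected_delete[OF two_connected] unfolding short_side_def by blast
qed

lemma short_side_grow:
  assumes "3 \<le> p" and Y: "short_side Y" and R: "is_path (V - Y) E R" "p - 1 \<le> path_length R"
  shows "\<exists>x\<in>V - Y. short_side (insert x Y)"
proof -
  have Y': "Y \<subseteq> V" "connected_graph Y E" "connected_graph (V - Y) E" using Y unfolding short_side_def by auto
  have "2 \<le> card (set R)"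
    using distinct_card[OF is_path_distinct[OF R(1)]] R(2) assms(1) by (simp add: path_length_def)
  then have "2 \<le> card (V - Y)"
    using card_mono[OF finite_Diff[OF two_connected_finite[OF two_connected]] is_path_subset[OF R(1)]] by simp
  moreover have "V - Y \<noteq> V" using Y'(1,2) unfolding connected_graph_def by blast
  ultimately obtain x y where x: "x \<in> V - Y" "y \<in> Y" "{x, y} \<in> E" "connected_graph (V - Y - {x}) E"
    using two_connected_removable_boundary_vertex[OF two_connected _ _ Y'(3)] Y'(1) by auto
  have "connected_graph (insert x Y) E" using connected_graph_insert[OF Y'(2) x(2,3)] .
  moreover have "V - insert x Y = V - Y - {x}" by blast
  moreover have "path_length Q < p - 1" if Q: "is_path (insert x Y) E Q" for Q
  proof (rule ccontr)
    assume "\<not> path_length Q < p - 1"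
    moreover have "set R \<inter> set Q \<subseteq> {x}" using is_path_subset[OF R(1)] is_path_subset[OF Q] by blast
    ultimately show False
      using long_paths_meet_twice[OF assms(1) is_path_mono[OF R(1)] R(2) is_path_mono[OF Q]] x(1) Y'(1)
      by auto
  qed
  ultimately show ?thesis using x(1,4) Y'(1) unfolding short_side_def by auto
qed

lemma exists_short_sides:
  assumes "3 \<le> p"
  shows "\<exists>Y. short_side Y \<and> (\<forall>R. is_path (V - Y) E R \<longrightarrow> path_length R < p - 1)"
proof -
  obtain w where "w \<in> V" using two_connected_connected[OF two_connected] unfolding connected_graph_def by blast
  then have "{w} \<in> {Y. short_side Y}" using short_side_singleton[OF assms] by blast
  moreover have "finite {Y. short_side Y}"
    using finite_subset[of _ "Pow V"] two_connected_finite[OF two_connected]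
    unfolding short_side_def by (metis (no_types, lifting) Pow_iff finite_Pow_iff mem_Collect_eq subsetI)
  ultimately obtain Y where Y: "short_side Y" and max: "\<And>Z. short_side Z \<Longrightarrow> Y \<subseteq> Z \<Longrightarrow> Z = Y"
    using finite_has_maximal[of "{Y. short_side Y}"] by blast
  have "path_length R < p - 1" if R: "is_path (V - Y) E R" for R
  proof (rule ccontr)
    assume "\<not> path_length R < p - 1"
    then obtain x where "x \<in> V - Y" "short_side (insert x Y)"
      using short_side_grow[OF assms Y R] by auto
    then show False using max[of "insert x Y"] by blast
  qed
  then show ?thesis using Y by blast
qed

end

theorem corollary1:
  fixes V :: "'a set" and E :: "'a set set" and p :: nat
  assumes "simple_graph V E"
    and "two_connected V E"
    and "card V \<ge> 4"
    and "\<exists>P. is_path V E P \<and> path_length P = p"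
    and "\<forall>P. is_path V E P \<longrightarrow> path_length P \<le> p"
  shows "\<exists>B. is_bond V E B \<and>
           (\<forall>P. is_path V E P \<and> path_length P \<ge> p - 1 \<longrightarrow> path_edges P \<inter> B \<noteq> {})"
proof -
  interpret bounded_path_graph V E p
    using assms(2,5) by unfold_locales blast+
  have "3 \<le> p" using longest_path_length_ge_3 assms(3,4) by blast
  then obtain Y where Y: "short_side Y" and other_short: "\<forall>R. is_path (V - Y) E R \<longrightarrow> path_length R < p - 1"
    using exists_short_sides by blast
  have "is_bond V E (edge_cut_of V E Y)"
    using connected_sides_edge_cut_is_bond Y two_connected_connected[OF assms(2)] unfolding short_side_def by blast
  moreover have "path_edges P \<inter> edge_cut_of V E Y \<noteq> {}" if P: "is_path V E P" "p - 1 \<le> path_length P" for P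
  proof -
    have "\<not> set P \<subseteq> Y" using is_path_restrict[OF P(1), of Y] Y P(2) unfolding short_side_def by fastforce
    moreover have "\<not> set P \<subseteq> V - Y" using is_path_restrict[OF P(1), of "V - Y"] other_short P(2) by fastforce
    ultimately obtain a b where "a \<in> set P" "a \<in> Y" "b \<in> set P" "b \<notin> Y"
      using is_path_subset[OF P(1)] by blast
    then show ?thesis using path_meets_edge_cut[OF P(1)] by blast
  qed
  ultimately show ?thesis by blast
qed

end
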